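(* Let $k\geq1$, $a_1,\dots,a_k\in\mathbb{R}\setminus\{0\}$ and real exponents $\alpha_1<\cdots<\alpha_k$. Then $f:(0,\infty)\to\mathbb{R}$, $f(x)=\sum_{i=1}^k a_ix^{\alpha_i}$, is amenable.
   Context: Relative distance on $\mathbb{R}$: $\mathrm{dist}(x,y)=0$ if $x=y=0$, $\mathrm{dist}(x,y)=|\log(y/x)|$ if $xy>0$, and $\mathrm{dist}(x,y)=\infty$ otherwise. For a real analytic function $f$ on an open set $\Omega\subseteq\mathbb{R}$, not identically zero, the condition number is $\kappa(f,x)=0$ if $x=0$, $\kappa(f,x)=\infty$ if $x\neq0$ and $f(x)=0$, and $\kappa(f,x)=|x|\,|f'(x)|/|f(x)|$ otherwise; $\mu(f,x)=1+\kappa(f,x)$. $f:\Omega\to\mathbb{R}$ is amenable if there is $C>0$ such that for every $x\in\Omega$ with $\kappa(f,x)<\infty$, the set $B_x=\{y\in\mathbb{R}:\mathrm{dist}(y,x)<1/(C\mu(f,x))\}$ is contained in $\Omega$ and $\mu(f,y)\leq C\mu(f,x)$ for all $y\in B_x$. *)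

theory Defs
  imports "HOL-Analysis.Analysis"
begin

definition reldist :: "real \<Rightarrow> real \<Rightarrow> ereal" where
  "reldist x y = (if x = 0 \<and> y = 0 then 0
                  else if x * y > 0 then ereal \<bar>ln (y / x)\<bar>
                  else \<infinity>)"

definition kappa :: "(real \<Rightarrow> real) \<Rightarrow> real \<Rightarrow> ereal" where
  "kappa f x = (if x = 0 then 0
                else if f x = 0 then \<infinity>
                else ereal (\<bar>x\<bar> * \<bar>deriv f x\<bar> / \<bar>f x\<bar>))"

definition mu :: "(real \<Rightarrow> real) \<Rightarrow> real \<Rightarrow> ereal" where
  "mu f x = 1 + kappa f x"

definition amenable :: "real set \<Rightarrow> (real \<Rightarrow> real) \<Rightarrow> bool" where
  "amenable \<Omega> f \<longleftrightarrow> (\<exists>C::real > 0. \<forall>x\<in>\<Omega>. kappa f x < \<infinity> \<longrightarrow>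
      (let B = {y. reldist y x < ereal (1 / (C * real_of_ereal (mu f x)))} in
         B \<subseteq> \<Omega> \<and> (\<forall>y\<in>B. mu f y \<le> ereal C * mu f x)))"

end

theory Submission
  imports Defs "HOL-Complex_Analysis.Complex_Analysis"
begin

text \<open>Substituting \<open>x = exp t\<close> turns \<open>f\<close> into the exponential sum
\<open>g t = \<Sum>i. a i * exp (\<alpha> i * t)\<close>, the relative distance into \<open>\<bar>s - t\<bar>\<close>, and
\<open>\<mu>(f, x)\<close> into \<open>1 + \<bar>g' t / g t\<bar>\<close>. Since \<open>g\<close> extends to an entire function,
near every point \<open>z\<close> its logarithmic derivative is \<open>m / (t - z)\<close> plus a bounded term,
\<open>m\<close> being the order of the zero of \<open>g\<close> at \<open>z\<close>; this gives the amenability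
estimate with a constant that is uniform near \<open>z\<close>. For \<open>\<bar>t\<bar>\<close> large a single
exponential dominates, so \<open>g' / g\<close> is bounded there, and compactness of the remaining
interval yields one constant for all \<open>t\<close>.\<close>

text \<open>With \<open>g = f \<circ> exp\<close>, \<open>log_mu g (ln x) = \<mu>(f, x)\<close>, and \<open>log_amenable_at C g (ln x)\<close>
is the amenability condition at \<open>x\<close> (see \<open>amenable_if_log_amenable\<close>).\<close>

definition log_mu :: "(real \<Rightarrow> real) \<Rightarrow> real \<Rightarrow> real" where
  "log_mu g t = 1 + \<bar>deriv g t / g t\<bar>"

definition log_amenable_at :: "real \<Rightarrow> (real \<Rightarrow> real) \<Rightarrow> real \<Rightarrow> bool" where
  "log_amenable_at C g t \<longleftrightarrow> (g t \<noteq> 0 \<longrightarrow> (\<forall>s. \<bar>s - t\<bar> < 1 / (C * log_mu g t) \<longrightarrow>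
      g s \<noteq> 0 \<and> log_mu g s \<le> C * log_mu g t))"

lemma log_mu_ge_1: "1 \<le> log_mu g t"
  by (simp add: log_mu_def)

lemma log_amenable_at_mono:
  assumes "log_amenable_at C g t" "0 < C" "C \<le> C'"
  shows "log_amenable_at C' g t"
  unfolding log_amenable_at_def
proof (intro impI allI)
  fix s assume "g t \<noteq> 0" and s: "\<bar>s - t\<bar> < 1 / (C' * log_mu g t)"
  have W: "1 \<le> log_mu g t" by (rule log_mu_ge_1)
  have "1 / (C' * log_mu g t) \<le> 1 / (C * log_mu g t)"
    using W assms(2,3) by (intro divide_left_mono mult_right_mono mult_pos_pos) auto
  with s assms(1) \<open>g t \<noteq> 0\<close> have "g s \<noteq> 0 \<and> log_mu g s \<le> C * log_mu g t"
    unfolding log_amenable_at_def by force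
  moreover have "C * log_mu g t \<le> C' * log_mu g t"
    using W assms(3) by (intro mult_right_mono) auto
  ultimately show "g s \<noteq> 0 \<and> log_mu g s \<le> C' * log_mu g t" by linarith
qed

lemma log_amenable_at_if_bounded:
  assumes "0 < r" and bounded: "\<And>s. \<bar>s - t\<bar> < r \<Longrightarrow> g s \<noteq> 0 \<and> \<bar>deriv g s / g s\<bar> \<le> B"
    and "1 + B \<le> C" "1 \<le> C * r"
  shows "log_amenable_at C g t"
  unfolding log_amenable_at_def
proof (intro impI allI)
  fix s assume s: "\<bar>s - t\<bar> < 1 / (C * log_mu g t)"
  have W: "1 \<le> log_mu g t" by (rule log_mu_ge_1)
  have C: "0 < C" using assms(1,4) by (metis zero_less_mult_pos2 zero_less_one less_le_trans)
  have "1 / (C * log_mu g t) \<le> 1 / C" using W C by (simp add: divide_le_eq)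
  also have "\<dots> \<le> r" using assms(4) C by (simp add: divide_le_eq mult.commute)
  finally have "\<bar>s - t\<bar> < r" using s by linarith
  then have "g s \<noteq> 0 \<and> \<bar>deriv g s / g s\<bar> \<le> B" by (rule bounded)
  moreover have "C \<le> C * log_mu g t" using W C by simp
  ultimately show "g s \<noteq> 0 \<and> log_mu g s \<le> C * log_mu g t"
    using assms(3) unfolding log_mu_def by linarith
qed

text \<open>\<open>m\<close> plays the role of the order of the zero of \<open>g\<close> at \<open>z\<close>:
\<open>m / (s - z)\<close> is the logarithmic derivative of \<open>(s - z) ^ m\<close>.\<close>

definition log_deriv_expansion :: "(real \<Rightarrow> real) \<Rightarrow> real \<Rightarrow> nat \<Rightarrow> real \<Rightarrow> real \<Rightarrow> bool" where
  "log_deriv_expansion g z m \<delta> B \<longleftrightarrow> (0 < m \<longrightarrow> g z = 0) \<and>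
     (\<forall>s. \<bar>s - z\<bar> < \<delta> \<longrightarrow> (s = z \<longrightarrow> m = 0) \<longrightarrow>
        g s \<noteq> 0 \<and> \<bar>deriv g s / g s - real m / (s - z)\<bar> \<le> B)"

lemma log_amenable_near_regular:
  assumes "log_deriv_expansion g z 0 \<delta> B" "0 < \<delta>" "\<bar>t - z\<bar> < \<delta> / 2"
  shows "log_amenable_at (1 + \<bar>B\<bar> + 2 / \<delta>) g t"
proof (rule log_amenable_at_if_bounded[where r = "\<delta> / 2" and B = "\<bar>B\<bar>"])
  fix s assume "\<bar>s - t\<bar> < \<delta> / 2"
  then have "\<bar>s - z\<bar> < \<delta>" using assms(3) by linarith
  then show "g s \<noteq> 0 \<and> \<bar>deriv g s / g s\<bar> \<le> \<bar>B\<bar>"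
    using assms(1) unfolding log_deriv_expansion_def by force
qed (use assms(2) in \<open>auto simp: field_simps\<close>)

lemma log_deriv_near_zero:
  assumes "log_deriv_expansion g z m \<delta> B" "\<bar>s - z\<bar> < \<delta>" "s \<noteq> z"
  shows "g s \<noteq> 0" and "m / \<bar>s - z\<bar> - B \<le> \<bar>deriv g s / g s\<bar>"
    and "\<bar>deriv g s / g s\<bar> \<le> m / \<bar>s - z\<bar> + B"
proof -
  show "g s \<noteq> 0" using assms unfolding log_deriv_expansion_def by auto
  have "\<bar>deriv g s / g s - m / (s - z)\<bar> \<le> B"
    using assms unfolding log_deriv_expansion_def by auto
  moreover have "\<bar>m / (s - z)\<bar> = m / \<bar>s - z\<bar>" by simp
  ultimately show "m / \<bar>s - z\<bar> - B \<le> \<bar>deriv g s / g s\<bar>"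
    and "\<bar>deriv g s / g s\<bar> \<le> m / \<bar>s - z\<bar> + B"
    using abs_triangle_ineq2[of "m / (s - z)" "deriv g s / g s"]
      abs_triangle_ineq2[of "deriv g s / g s" "m / (s - z)"]
      abs_minus_commute[of "m / (s - z)" "deriv g s / g s"] by linarith+
qed

lemma log_mu_large_near_zero:
  assumes expansion: "log_deriv_expansion g z m \<delta> B"
    and "\<bar>t - z\<bar> < \<delta>" "t \<noteq> z" "\<bar>t - z\<bar> * (2 * \<bar>B\<bar> + 2) \<le> m"
  shows "m / (2 * \<bar>t - z\<bar>) \<le> log_mu g t"
proof -
  define d where "d = \<bar>t - z\<bar>"
  have "0 < d" using \<open>t \<noteq> z\<close> by (simp add: d_def)
  have "B * (2 * d) \<le> \<bar>B\<bar> * (2 * d)" using \<open>0 < d\<close> by (intro mult_right_mono) auto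
  also have "\<dots> \<le> d * (2 * \<bar>B\<bar> + 2)" using \<open>0 < d\<close> by (simp add: algebra_simps)
  also have "\<dots> \<le> m" using assms(4) by (simp add: d_def)
  finally have "B \<le> m / (2 * d)" using \<open>0 < d\<close> by (simp add: field_simps)
  moreover have "m / d - B \<le> \<bar>deriv g t / g t\<bar>"
    using log_deriv_near_zero(2)[OF expansion assms(2,3)] by (simp add: d_def)
  moreover have "m / d = 2 * (m / (2 * d))" by simp
  ultimately have "m / (2 * d) \<le> 1 + \<bar>deriv g t / g t\<bar>" by linarith
  then show ?thesis by (simp add: log_mu_def d_def)
qed

text \<open>Near a zero of order \<open>m > 0\<close>, \<open>log_mu g t \<ge> m / (2 \<bar>t - z\<bar>)\<close>; hence the
admissible interval around \<open>t\<close> keeps distance \<open>\<bar>t - z\<bar> / 2\<close> from \<open>z\<close>, where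
\<open>log_mu g\<close> exceeds \<open>log_mu g t\<close> at most by a bounded factor.\<close>

lemma log_amenable_at_near_zero:
  assumes expansion: "log_deriv_expansion g z m \<delta> B" and "0 < m"
    and t: "\<bar>t - z\<bar> < \<delta> / 2" "\<bar>t - z\<bar> * (2 * \<bar>B\<bar> + 2) \<le> m"
  shows "log_amenable_at (5 + \<bar>B\<bar>) g t"
  unfolding log_amenable_at_def
proof (intro impI allI)
  fix s assume "g t \<noteq> 0" and s: "\<bar>s - t\<bar> < 1 / ((5 + \<bar>B\<bar>) * log_mu g t)"
  define d where "d = \<bar>t - z\<bar>"
  have "t \<noteq> z" using \<open>g t \<noteq> 0\<close> expansion \<open>0 < m\<close> unfolding log_deriv_expansion_def by auto
  then have "0 < d" by (simp add: d_def)
  have W: "1 \<le> log_mu g t" by (rule log_mu_ge_1)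
  have "\<bar>t - z\<bar> < \<delta>" using t(1) by linarith
  then have large: "m / (2 * d) \<le> log_mu g t"
    using log_mu_large_near_zero[OF expansion _ \<open>t \<noteq> z\<close> t(2)] by (simp add: d_def)
  have "m \<le> 2 * d * log_mu g t" using large \<open>0 < d\<close> by (simp add: field_simps)
  moreover have "5 * log_mu g t * d \<le> (5 + \<bar>B\<bar>) * log_mu g t * d"
    using W \<open>0 < d\<close> by (intro mult_right_mono) auto
  moreover have "0 < (5 + \<bar>B\<bar>) * log_mu g t" using W by (simp add: add_pos_nonneg)
  ultimately have "1 / ((5 + \<bar>B\<bar>) * log_mu g t) \<le> d / 2"
    using \<open>0 < m\<close> by (simp add: pos_divide_le_eq algebra_simps)
  moreover have "\<bar>t - z\<bar> \<le> \<bar>s - z\<bar> + \<bar>s - t\<bar>" "\<bar>s - z\<bar> \<le> \<bar>t - z\<bar> + \<bar>s - t\<bar>"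
    by arith+
  ultimately have s_z: "d / 2 < \<bar>s - z\<bar>" "\<bar>s - z\<bar> < \<delta>"
    using s t(1) unfolding d_def by linarith+
  then have "s \<noteq> z" using \<open>0 < d\<close> by auto
  have "m / \<bar>s - z\<bar> \<le> m / (d / 2)"
    using s_z \<open>0 < d\<close> \<open>s \<noteq> z\<close> by (intro divide_left_mono) auto
  also have "\<dots> = 4 * (m / (2 * d))" by simp
  also have "\<dots> \<le> 4 * log_mu g t" using large by simp
  finally have "\<bar>deriv g s / g s\<bar> \<le> B + 4 * log_mu g t"
    using log_deriv_near_zero(3)[OF expansion s_z(2) \<open>s \<noteq> z\<close>] by linarith
  moreover have "1 + \<bar>B\<bar> \<le> (1 + \<bar>B\<bar>) * log_mu g t"
    using mult_left_mono[OF W, of "1 + \<bar>B\<bar>"] by simp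
  moreover have "(5 + \<bar>B\<bar>) * log_mu g t = (1 + \<bar>B\<bar>) * log_mu g t + 4 * log_mu g t"
    by (simp add: algebra_simps)
  ultimately have "log_mu g s \<le> (5 + \<bar>B\<bar>) * log_mu g t"
    using abs_ge_self[of B] unfolding log_mu_def[of g s] by linarith
  with log_deriv_near_zero(1)[OF expansion s_z(2) \<open>s \<noteq> z\<close>]
  show "g s \<noteq> 0 \<and> log_mu g s \<le> (5 + \<bar>B\<bar>) * log_mu g t" by simp
qed

lemma log_amenable_near:
  assumes expansion: "log_deriv_expansion g z m \<delta> B" and "0 < \<delta>"
  shows "\<exists>\<epsilon>>0. \<exists>C>0. \<forall>t. \<bar>t - z\<bar> < \<epsilon> \<longrightarrow> log_amenable_at C g t"
proof (cases "m = 0")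
  case True
  then have "\<forall>t. \<bar>t - z\<bar> < \<delta> / 2 \<longrightarrow> log_amenable_at (1 + \<bar>B\<bar> + 2 / \<delta>) g t"
    using log_amenable_near_regular[of g z \<delta> B] expansion \<open>0 < \<delta>\<close> by blast
  moreover have "0 < \<delta> / 2" "0 < 1 + \<bar>B\<bar> + 2 / \<delta>" using \<open>0 < \<delta>\<close> by (simp_all add: add_pos_nonneg)
  ultimately show ?thesis by blast
next
  case False
  define \<epsilon> where "\<epsilon> = min (\<delta> / 2) (m / (2 * \<bar>B\<bar> + 2))"
  have "log_amenable_at (5 + \<bar>B\<bar>) g t" if "\<bar>t - z\<bar> < \<epsilon>" for t
  proof (rule log_amenable_at_near_zero[OF expansion])
    show "0 < m" using False by simp
    show "\<bar>t - z\<bar> < \<delta> / 2" "\<bar>t - z\<bar> * (2 * \<bar>B\<bar> + 2) \<le> m"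
      using that by (auto simp: \<epsilon>_def field_simps)
  qed
  moreover have "0 < \<epsilon>" "0 < 5 + \<bar>B\<bar>" using False \<open>0 < \<delta>\<close> by (simp_all add: \<epsilon>_def add_pos_nonneg)
  ultimately show ?thesis by blast
qed

lemma compact_uniform_bound:
  fixes K :: "'a::metric_space set" and P :: "real \<Rightarrow> 'a \<Rightarrow> bool"
  assumes "compact K" and mono: "\<And>C C' x. P C x \<Longrightarrow> C \<le> C' \<Longrightarrow> P C' x"
    and local: "\<And>z. z \<in> K \<Longrightarrow> \<exists>\<epsilon>>0. \<exists>C. \<forall>x\<in>ball z \<epsilon>. P C x"
  shows "\<exists>C. \<forall>x\<in>K. P C x"
proof -
  have "\<forall>z\<in>K. \<exists>\<epsilon>. 0 < \<epsilon> \<and> (\<exists>C. \<forall>x\<in>ball z \<epsilon>. P C x)" using local by blast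
  then obtain \<epsilon> where \<epsilon>: "\<forall>z\<in>K. 0 < \<epsilon> z \<and> (\<exists>C. \<forall>x\<in>ball z (\<epsilon> z). P C x)"
    by (rule bchoice[THEN exE])
  then have "\<forall>z\<in>K. \<exists>C. \<forall>x\<in>ball z (\<epsilon> z). P C x" by blast
  then obtain C where C: "\<forall>z\<in>K. \<forall>x\<in>ball z (\<epsilon> z). P (C z) x"
    by (rule bchoice[THEN exE])
  have cover: "K \<subseteq> (\<Union>z\<in>K. ball z (\<epsilon> z))" using \<epsilon> by force
  obtain Z where Z: "Z \<subseteq> K" "finite Z" "K \<subseteq> (\<Union>z\<in>Z. ball z (\<epsilon> z))"
    using compactE_image[OF \<open>compact K\<close> _ cover] open_ball by blast
  have "P (\<Sum>z\<in>Z. \<bar>C z\<bar>) x" if "x \<in> K" for x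
  proof -
    obtain z where "z \<in> Z" "x \<in> ball z (\<epsilon> z)" using Z(3) \<open>x \<in> K\<close> by blast
    then have "P (C z) x" using C Z(1) by blast
    have "C z \<le> \<bar>C z\<bar>" by (rule abs_ge_self)
    also have "\<dots> \<le> (\<Sum>z\<in>Z. \<bar>C z\<bar>)"
      using \<open>z \<in> Z\<close> Z(2) by (intro member_le_sum) auto
    finally show ?thesis by (rule mono[OF \<open>P (C z) x\<close>])
  qed
  then show ?thesis by blast
qed

lemma log_amenable_uniform:
  assumes near: "\<And>z. \<exists>\<delta>>0. \<exists>m B. log_deriv_expansion g z m \<delta> B"
    and infinity: "eventually (\<lambda>s. g s \<noteq> 0 \<and> \<bar>deriv g s / g s\<bar> \<le> M) at_infinity"
  shows "\<exists>C>0. \<forall>t. log_amenable_at C g t"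
proof -
  obtain T where T: "\<And>s. T \<le> \<bar>s\<bar> \<Longrightarrow> g s \<noteq> 0 \<and> \<bar>deriv g s / g s\<bar> \<le> M"
    using infinity by (auto simp: eventually_at_infinity)
  have outer: "log_amenable_at (2 + \<bar>M\<bar>) g t" if "\<bar>T\<bar> + 1 \<le> \<bar>t\<bar>" for t
  proof (rule log_amenable_at_if_bounded[where r = 1 and B = "\<bar>M\<bar>"])
    fix s assume "\<bar>s - t\<bar> < 1"
    then have "T \<le> \<bar>s\<bar>" using that by linarith
    then show "g s \<noteq> 0 \<and> \<bar>deriv g s / g s\<bar> \<le> \<bar>M\<bar>" using T by force
  qed auto
  let ?P = "\<lambda>C t. 0 < C \<and> log_amenable_at C g t"
  have "\<exists>C. \<forall>t\<in>cball 0 (\<bar>T\<bar> + 1). ?P C t"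
  proof (rule compact_uniform_bound)
    show "?P C' t" if "?P C t" "C \<le> C'" for C C' t
      using that log_amenable_at_mono by force
    show "\<exists>\<epsilon>>0. \<exists>C. \<forall>t\<in>ball z \<epsilon>. ?P C t" for z
    proof -
      obtain \<delta> m B where "0 < \<delta>" "log_deriv_expansion g z m \<delta> B" using near by blast
      then obtain \<epsilon> C where "0 < \<epsilon>" "0 < C" "\<forall>t. \<bar>t - z\<bar> < \<epsilon> \<longrightarrow> log_amenable_at C g t"
        using log_amenable_near by blast
      then have "\<forall>t\<in>ball z \<epsilon>. ?P C t" by (auto simp: dist_real_def abs_minus_commute)
      with \<open>0 < \<epsilon>\<close> show ?thesis by blast
    qed
  qed simp
  then obtain C where C: "\<And>t. \<bar>t\<bar> \<le> \<bar>T\<bar> + 1 \<Longrightarrow> ?P C t"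
    by (metis mem_cball_0 real_norm_def)
  have "log_amenable_at (max C (2 + \<bar>M\<bar>)) g t" for t
  proof (cases "\<bar>T\<bar> + 1 \<le> \<bar>t\<bar>")
    case True
    then have "log_amenable_at (2 + \<bar>M\<bar>) g t" by (rule outer)
    then show ?thesis by (rule log_amenable_at_mono) (simp_all add: add_pos_nonneg)
  next
    case False
    then have "log_amenable_at C g t" "0 < C" using C[of t] by simp_all
    then show ?thesis by (rule log_amenable_at_mono) simp_all
  qed
  moreover have "0 < max C (2 + \<bar>M\<bar>)" by (simp add: less_max_iff_disj add_pos_nonneg)
  ultimately show ?thesis by blast
qed

lemma reldist_less_ereal_iff:
  assumes "0 < x"
  shows "reldist y x < ereal r \<longleftrightarrow> 0 < y \<and> \<bar>ln y - ln x\<bar> < r"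
proof (cases "0 < y")
  case True
  then have "ln (x / y) = ln x - ln y" using assms by (simp add: ln_div)
  then show ?thesis using True assms by (simp add: reldist_def abs_minus_commute)
next
  case False
  then have "\<not> 0 < y * x" using assms by (simp add: zero_less_mult_iff)
  then show ?thesis using False assms by (auto simp: reldist_def)
qed

lemma deriv_eq_deriv_ln:
  fixes f g :: "real \<Rightarrow> real"
  assumes f: "\<And>x. 0 < x \<Longrightarrow> f x = g (ln x)" and "g field_differentiable at (ln x)" "0 < x"
  shows "deriv f x = deriv g (ln x) / x"
proof -
  have "(g has_real_derivative deriv g (ln x)) (at (ln x))"
    using assms(2) by (simp add: DERIV_deriv_iff_field_differentiable)
  then have "((\<lambda>x. g (ln x)) has_real_derivative deriv g (ln x) * (1 / x)) (at x)"
    using DERIV_ln_divide[OF \<open>0 < x\<close>] by (rule DERIV_chain2)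
  then have "(f has_real_derivative deriv g (ln x) * (1 / x)) (at x)"
    by (rule has_field_derivative_transform_within_open[where S = "{0<..}"]) (use assms in auto)
  then show ?thesis by (simp add: DERIV_imp_deriv)
qed

lemma mu_eq_log_mu:
  fixes f g :: "real \<Rightarrow> real"
  assumes f: "\<And>x. 0 < x \<Longrightarrow> f x = g (ln x)" and "g field_differentiable at (ln x)" "0 < x"
    and "f x \<noteq> 0"
  shows "mu f x = ereal (log_mu g (ln x))"
  using assms deriv_eq_deriv_ln[OF assms(1-3)]
  by (simp add: mu_def kappa_def log_mu_def abs_divide)

lemma amenable_if_log_amenable:
  fixes f g :: "real \<Rightarrow> real"
  assumes f: "\<And>x. 0 < x \<Longrightarrow> f x = g (ln x)" and g: "\<And>t. g field_differentiable at t"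
    and "0 < C" and log_amenable: "\<And>t. log_amenable_at C g t"
  shows "amenable {0<..} f"
  unfolding amenable_def Let_def
proof (intro exI[of _ C] conjI ballI impI \<open>0 < C\<close>)
  fix x :: real assume "x \<in> {0<..}" and "kappa f x < \<infinity>"
  then have "0 < x" and "f x \<noteq> 0" by (auto simp: kappa_def split: if_splits)
  then have "g (ln x) \<noteq> 0" and mu_x: "mu f x = ereal (log_mu g (ln x))"
    using f g mu_eq_log_mu by auto
  have ball: "reldist y x < ereal (1 / (C * real_of_ereal (mu f x))) \<longleftrightarrow>
      0 < y \<and> \<bar>ln y - ln x\<bar> < 1 / (C * log_mu g (ln x))" for y
    using reldist_less_ereal_iff[OF \<open>0 < x\<close>] mu_x by simp
  then show "{y. reldist y x < ereal (1 / (C * real_of_ereal (mu f x)))} \<subseteq> {0<..}" by auto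
  fix y assume "y \<in> {y. reldist y x < ereal (1 / (C * real_of_ereal (mu f x)))}"
  then have "0 < y" "\<bar>ln y - ln x\<bar> < 1 / (C * log_mu g (ln x))" using ball by auto
  then have "g (ln y) \<noteq> 0 \<and> log_mu g (ln y) \<le> C * log_mu g (ln x)"
    using log_amenable[of "ln x"] \<open>g (ln x) \<noteq> 0\<close> unfolding log_amenable_at_def by blast
  then show "mu f y \<le> ereal C * mu f x"
    using mu_eq_log_mu[OF f g \<open>0 < y\<close>] f[OF \<open>0 < y\<close>] mu_x by simp
qed

definition exp_sum :: "'i set \<Rightarrow> ('i \<Rightarrow> real) \<Rightarrow> ('i \<Rightarrow> real) \<Rightarrow> real \<Rightarrow> real" where
  "exp_sum I b \<alpha> t = (\<Sum>i\<in>I. b i * exp (\<alpha> i * t))"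

lemma has_real_derivative_exp_sum:
  "(exp_sum I b \<alpha> has_real_derivative exp_sum I (\<lambda>i. b i * \<alpha> i) \<alpha> t) (at t)"
  unfolding exp_sum_def by (auto intro!: derivative_eq_intros sum.cong simp: algebra_simps)

lemma deriv_exp_sum: "deriv (exp_sum I b \<alpha>) = exp_sum I (\<lambda>i. b i * \<alpha> i) \<alpha>"
  using has_real_derivative_exp_sum DERIV_imp_deriv by blast

lemma exp_sum_mirror: "exp_sum I b \<alpha> (- t) = exp_sum I b (\<lambda>i. - \<alpha> i) t"
  by (simp add: exp_sum_def)

lemma exp_sum_dominant_tendsto:
  assumes "finite I" "j \<in> I" and dominant: "\<And>i. i \<in> I \<Longrightarrow> i \<noteq> j \<Longrightarrow> \<alpha> i < \<alpha> j"
  shows "((\<lambda>s. exp_sum I b \<alpha> s * exp (- \<alpha> j * s)) \<longlongrightarrow> b j) at_top"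
proof -
  have eq: "exp_sum I b \<alpha> s * exp (- \<alpha> j * s) = (\<Sum>i\<in>I. b i * exp ((\<alpha> i - \<alpha> j) * s))" for s
    unfolding exp_sum_def sum_distrib_right
    by (intro sum.cong) (auto simp: algebra_simps simp flip: exp_add)
  have "((\<lambda>s. b i * exp ((\<alpha> i - \<alpha> j) * s)) \<longlongrightarrow> (if i = j then b j else 0)) at_top"
    if "i \<in> I" for i
  proof (cases "i = j")
    case False
    then have "\<alpha> i - \<alpha> j < 0" using dominant that by simp
    then have "filterlim (\<lambda>s. (\<alpha> i - \<alpha> j) * s) at_bot at_top"
      by (rule filterlim_tendsto_neg_mult_at_bot[OF tendsto_const _ filterlim_ident])
    then have "((\<lambda>s. exp ((\<alpha> i - \<alpha> j) * s)) \<longlongrightarrow> 0) at_top"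
      by (rule filterlim_compose[OF exp_at_bot])
    then show ?thesis using False by (simp add: tendsto_mult_right_zero)
  qed simp
  then have "((\<lambda>s. \<Sum>i\<in>I. b i * exp ((\<alpha> i - \<alpha> j) * s)) \<longlongrightarrow> (\<Sum>i\<in>I. if i = j then b j else 0)) at_top"
    by (rule tendsto_sum)
  then have "((\<lambda>s. \<Sum>i\<in>I. b i * exp ((\<alpha> i - \<alpha> j) * s)) \<longlongrightarrow> b j) at_top"
    using assms(1,2) by simp
  then show ?thesis unfolding eq .
qed

lemma exp_sum_log_deriv_bounded_at_top:
  assumes "finite I" "j \<in> I" "b j \<noteq> 0" and dominant: "\<And>i. i \<in> I \<Longrightarrow> i \<noteq> j \<Longrightarrow> \<alpha> i < \<alpha> j"
  shows "eventually (\<lambda>s. exp_sum I b \<alpha> s \<noteq> 0 \<and>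
    \<bar>deriv (exp_sum I b \<alpha>) s / exp_sum I b \<alpha> s\<bar> \<le> \<bar>\<alpha> j\<bar> + 1) at_top"
proof -
  let ?E = "\<lambda>s. exp (- \<alpha> j * s)"
  have lim: "((\<lambda>s. exp_sum I b \<alpha> s * ?E s) \<longlongrightarrow> b j) at_top"
    and lim': "((\<lambda>s. exp_sum I (\<lambda>i. b i * \<alpha> i) \<alpha> s * ?E s) \<longlongrightarrow> b j * \<alpha> j) at_top"
    using exp_sum_dominant_tendsto[of I j \<alpha>, OF assms(1,2) dominant] by auto
  have "((\<lambda>s. (exp_sum I (\<lambda>i. b i * \<alpha> i) \<alpha> s * ?E s) / (exp_sum I b \<alpha> s * ?E s))
      \<longlongrightarrow> b j * \<alpha> j / b j) at_top"
    by (rule tendsto_divide[OF lim' lim \<open>b j \<noteq> 0\<close>])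
  then have "((\<lambda>s. deriv (exp_sum I b \<alpha>) s / exp_sum I b \<alpha> s) \<longlongrightarrow> \<alpha> j) at_top"
    using \<open>b j \<noteq> 0\<close> by (simp add: deriv_exp_sum)
  then have "((\<lambda>s. \<bar>deriv (exp_sum I b \<alpha>) s / exp_sum I b \<alpha> s\<bar>) \<longlongrightarrow> \<bar>\<alpha> j\<bar>) at_top"
    by (rule tendsto_rabs)
  then have "eventually (\<lambda>s. \<bar>deriv (exp_sum I b \<alpha>) s / exp_sum I b \<alpha> s\<bar> < \<bar>\<alpha> j\<bar> + 1) at_top"
    by (rule order_tendstoD(2)) simp
  moreover have "eventually (\<lambda>s. exp_sum I b \<alpha> s * ?E s \<noteq> 0) at_top"
    using tendsto_imp_eventually_ne[OF lim \<open>b j \<noteq> 0\<close>] .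
  ultimately show ?thesis by eventually_elim auto
qed

lemma exp_sum_log_deriv_bounded_at_bot:
  assumes "finite I" "j \<in> I" "b j \<noteq> 0" and dominant: "\<And>i. i \<in> I \<Longrightarrow> i \<noteq> j \<Longrightarrow> \<alpha> j < \<alpha> i"
  shows "eventually (\<lambda>s. exp_sum I b \<alpha> s \<noteq> 0 \<and>
    \<bar>deriv (exp_sum I b \<alpha>) s / exp_sum I b \<alpha> s\<bar> \<le> \<bar>\<alpha> j\<bar> + 1) at_bot"
proof -
  have mirror: "deriv (exp_sum I b \<alpha>) (- s) = - deriv (exp_sum I b (\<lambda>i. - \<alpha> i)) s" for s
    by (simp add: deriv_exp_sum exp_sum_def sum_negf)
  have "eventually (\<lambda>s. exp_sum I b (\<lambda>i. - \<alpha> i) s \<noteq> 0 \<and>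
      \<bar>deriv (exp_sum I b (\<lambda>i. - \<alpha> i)) s / exp_sum I b (\<lambda>i. - \<alpha> i) s\<bar> \<le> \<bar>- \<alpha> j\<bar> + 1) at_top"
    using assms by (intro exp_sum_log_deriv_bounded_at_top) auto
  then show ?thesis
    unfolding at_bot_mirror eventually_filtermap by (simp add: exp_sum_mirror mirror)
qed

lemma exp_sum_log_deriv_bounded_at_infinity:
  assumes "finite I" "I \<noteq> {}" "inj_on \<alpha> I" "\<And>i. i \<in> I \<Longrightarrow> b i \<noteq> 0"
  shows "\<exists>M. eventually (\<lambda>s. exp_sum I b \<alpha> s \<noteq> 0 \<and>
    \<bar>deriv (exp_sum I b \<alpha>) s / exp_sum I b \<alpha> s\<bar> \<le> M) at_infinity"
proof -
  have "Max (\<alpha> ` I) \<in> \<alpha> ` I" "Min (\<alpha> ` I) \<in> \<alpha> ` I"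
    using assms(1,2) by (intro Max_in Min_in; simp)+
  then obtain jmax jmin where jmax: "jmax \<in> I" "\<alpha> jmax = Max (\<alpha> ` I)"
    and jmin: "jmin \<in> I" "\<alpha> jmin = Min (\<alpha> ` I)"
    by (metis imageE)
  have distinct: "\<alpha> i \<noteq> \<alpha> j" if "i \<in> I" "j \<in> I" "i \<noteq> j" for i j
    using assms(3) that by (auto dest: inj_onD)
  have "\<alpha> i < \<alpha> jmax" if "i \<in> I" "i \<noteq> jmax" for i
    using distinct[OF that(1) jmax(1) that(2)] jmax(2) assms(1) that(1)
    by (auto intro: Max_ge simp: order_less_le)
  then have top: "eventually (\<lambda>s. exp_sum I b \<alpha> s \<noteq> 0 \<and>
      \<bar>deriv (exp_sum I b \<alpha>) s / exp_sum I b \<alpha> s\<bar> \<le> \<bar>\<alpha> jmax\<bar> + 1) at_top"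
    using assms(1,4) jmax(1) by (intro exp_sum_log_deriv_bounded_at_top) auto
  have "\<alpha> jmin < \<alpha> i" if "i \<in> I" "i \<noteq> jmin" for i
    using distinct[OF that(1) jmin(1) that(2)] jmin(2) assms(1) that(1)
    by (auto intro: Min_le simp: order_less_le)
  then have bot: "eventually (\<lambda>s. exp_sum I b \<alpha> s \<noteq> 0 \<and>
      \<bar>deriv (exp_sum I b \<alpha>) s / exp_sum I b \<alpha> s\<bar> \<le> \<bar>\<alpha> jmin\<bar> + 1) at_bot"
    using assms(1,4) jmin(1) by (intro exp_sum_log_deriv_bounded_at_bot) auto
  let ?M = "max (\<bar>\<alpha> jmax\<bar> + 1) (\<bar>\<alpha> jmin\<bar> + 1)"
  have "eventually (\<lambda>s. exp_sum I b \<alpha> s \<noteq> 0 \<and>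
      \<bar>deriv (exp_sum I b \<alpha>) s / exp_sum I b \<alpha> s\<bar> \<le> ?M) F" if "F = at_top \<or> F = at_bot" for F
    using that top bot by (elim disjE) (auto elim!: eventually_mono)
  then show ?thesis unfolding at_infinity_eq_at_top_bot eventually_sup by blast
qed

lemma exp_sum_entire_extension:
  "\<exists>F. F holomorphic_on UNIV \<and> (\<forall>s. F (of_real s) = of_real (exp_sum I b \<alpha> s))"
proof (intro exI conjI allI)
  let ?F = "\<lambda>w. \<Sum>i\<in>I. of_real (b i) * exp (of_real (\<alpha> i) * w) :: complex"
  show "?F holomorphic_on UNIV" by (intro holomorphic_intros)
  show "?F (of_real s) = of_real (exp_sum I b \<alpha> s)" for s
    unfolding exp_sum_def of_real_sum by (intro sum.cong refl) (metis exp_of_real of_real_mult)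
qed

lemma deriv_real_restriction:
  fixes F :: "complex \<Rightarrow> complex"
  assumes "F holomorphic_on UNIV" and real: "\<And>s. F (of_real s) = of_real (g s)"
  shows "deriv g s = Re (deriv F (of_real s))"
proof -
  have "(F has_field_derivative deriv F (of_real s)) (at (of_real s))"
    using assms(1) by (intro holomorphic_derivI[of F UNIV]) auto
  then have "((\<lambda>x. Re (F (of_real x))) has_real_derivative Re (deriv F (of_real s))) (at s)"
    by (intro has_field_derivative_Re has_vector_derivative_real_field)
  then show ?thesis using real by (simp add: DERIV_imp_deriv)
qed

lemma log_deriv_of_factorization:
  fixes F U :: "complex \<Rightarrow> complex"
  assumes "open S" "U holomorphic_on S" and factor: "\<And>w. w \<in> S \<Longrightarrow> F w = U w * (w - z) ^ m"
    and "w \<in> S" "U w \<noteq> 0" "w = z \<longrightarrow> m = 0"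
  shows "deriv F w / F w = deriv U w / U w + of_nat m / (w - z)"
proof -
  have "(U has_field_derivative deriv U w) (at w)"
    using holomorphic_derivI assms(1,2,4) by blast
  then have "((\<lambda>w. U w * (w - z) ^ m) has_field_derivative
      deriv U w * (w - z) ^ m + U w * (of_nat m * (w - z) ^ (m - 1))) (at w)"
    by (auto intro!: derivative_eq_intros)
  then have "(F has_field_derivative
      deriv U w * (w - z) ^ m + U w * (of_nat m * (w - z) ^ (m - 1))) (at w)"
    by (rule has_field_derivative_transform_within_open[OF _ \<open>open S\<close> \<open>w \<in> S\<close>]) (simp add: factor)
  then have dF: "deriv F w = deriv U w * (w - z) ^ m + U w * (of_nat m * (w - z) ^ (m - 1))"
    by (rule DERIV_imp_deriv)
  show ?thesis
  proof (cases m)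
    case 0
    then show ?thesis using dF factor[OF \<open>w \<in> S\<close>] \<open>U w \<noteq> 0\<close> by simp
  next
    case (Suc n)
    then have "w \<noteq> z" using assms(6) by auto
    have Fw: "F w = (w - z) ^ n * (U w * (w - z))"
      using factor[OF \<open>w \<in> S\<close>] Suc by (simp add: algebra_simps)
    have "deriv F w = (w - z) ^ n * (deriv U w * (w - z) + of_nat m * U w)"
      using dF Suc by (simp add: algebra_simps)
    then have "deriv F w / F w = (deriv U w * (w - z) + of_nat m * U w) / (U w * (w - z))"
      unfolding Fw using \<open>w \<noteq> z\<close> by simp
    also have "\<dots> = deriv U w / U w + of_nat m / (w - z)"
      using \<open>U w \<noteq> 0\<close> \<open>w \<noteq> z\<close> by (simp add: field_simps)
    finally show ?thesis .
  qed
qed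

lemma log_deriv_expansion_entire:
  fixes F :: "complex \<Rightarrow> complex"
  assumes holo: "F holomorphic_on UNIV" and "F u \<noteq> 0"
  shows "\<exists>r>0. \<exists>m B. (0 < m \<longrightarrow> F c = 0) \<and> (\<forall>w\<in>ball c r. (w = c \<longrightarrow> m = 0) \<longrightarrow>
    F w \<noteq> 0 \<and> norm (deriv F w / F w - of_nat m / (w - c)) \<le> B)"
proof -
  define n where "n = zorder F c"
  define U where "U = zor_poly F c"
  have "(if F c = 0 then 0 < n else n = 0) \<and>
      (\<exists>r>0. cball c r \<subseteq> UNIV \<and> U holomorphic_on cball c r \<and>
        (\<forall>w\<in>cball c r. F w = U w * (w - c) ^ nat n \<and> U w \<noteq> 0))"
    unfolding n_def U_def by (rule zorder_exist_zero[OF holo]) (use \<open>F u \<noteq> 0\<close> in auto)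
  then obtain r where order: "if F c = 0 then 0 < n else n = 0"
    and "0 < r" and U_holo: "U holomorphic_on cball c r"
    and factor: "\<And>w. w \<in> cball c r \<Longrightarrow> F w = U w * (w - c) ^ nat n \<and> U w \<noteq> 0"
    by blast
  have U_ball: "U holomorphic_on ball c r"
    using U_holo by (rule holomorphic_on_subset) auto
  have "continuous_on (ball c r) (\<lambda>w. deriv U w / U w)"
    using factor
    by (intro continuous_intros holomorphic_on_imp_continuous_on holomorphic_deriv U_ball) auto
  then have "continuous_on (cball c (r / 2)) (\<lambda>w. deriv U w / U w)"
    by (rule continuous_on_subset) (use \<open>0 < r\<close> in auto)
  then have "bounded ((\<lambda>w. deriv U w / U w) ` cball c (r / 2))"
    by (intro compact_imp_bounded compact_continuous_image compact_cball)
  then obtain B where B: "\<And>w. w \<in> cball c (r / 2) \<Longrightarrow> norm (deriv U w / U w) \<le> B"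
    unfolding bounded_iff by blast
  have "\<forall>w\<in>ball c (r / 2). (w = c \<longrightarrow> nat n = 0) \<longrightarrow>
      F w \<noteq> 0 \<and> norm (deriv F w / F w - of_nat (nat n) / (w - c)) \<le> B"
  proof (intro ballI impI conjI)
    fix w assume "w \<in> ball c (r / 2)" "w = c \<longrightarrow> nat n = 0"
    note that = this
    have "w \<in> ball c r" using that(1) zero_le_dist[of c w] unfolding mem_ball by linarith
    then show "F w \<noteq> 0" using factor[of w] that(2) by auto
    have "deriv F w / F w = deriv U w / U w + of_nat (nat n) / (w - c)"
      using factor \<open>w \<in> ball c r\<close> that(2) by (intro log_deriv_of_factorization[OF open_ball U_ball]) auto
    then show "norm (deriv F w / F w - of_nat (nat n) / (w - c)) \<le> B" using B that(1) by auto
  qed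
  moreover have "0 < nat n \<longrightarrow> F c = 0" using order by (auto split: if_splits)
  moreover have "0 < r / 2" using \<open>0 < r\<close> by simp
  ultimately show ?thesis by (intro exI[of _ "r / 2"] conjI exI[of _ "nat n"] exI[of _ B])
qed

lemma log_deriv_expansion_of_real_entire:
  fixes F :: "complex \<Rightarrow> complex"
  assumes holo: "F holomorphic_on UNIV" and real: "\<And>s. F (of_real s) = of_real (g s)"
    and "F u \<noteq> 0"
  shows "\<exists>\<delta>>0. \<exists>m B. log_deriv_expansion g z m \<delta> B"
proof -
  obtain r m B where "0 < r" and "0 < m \<longrightarrow> F (of_real z) = 0"
    and complex: "\<And>w. w \<in> ball (of_real z) r \<Longrightarrow> (w = of_real z \<longrightarrow> m = 0) \<Longrightarrow>
      F w \<noteq> 0 \<and> norm (deriv F w / F w - of_nat m / (w - of_real z)) \<le> B"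
    using log_deriv_expansion_entire[OF holo \<open>F u \<noteq> 0\<close>, of "of_real z"] by blast
  have "log_deriv_expansion g z m r B"
    unfolding log_deriv_expansion_def
  proof (intro conjI allI impI)
    show "g z = 0" if "0 < m" using \<open>0 < m \<longrightarrow> F (of_real z) = 0\<close> real[of z] that by simp
    fix s assume s: "\<bar>s - z\<bar> < r" "s = z \<longrightarrow> m = 0"
    have "complex_of_real s \<in> ball (of_real z) r" using s(1) by (simp add: dist_real_def abs_minus_commute)
    then have "F (of_real s) \<noteq> 0" and
      "norm (deriv F (of_real s) / F (of_real s) - of_nat m / (of_real s - of_real z)) \<le> B"
      using complex s(2) by auto
    then show "g s \<noteq> 0" using real by simp
    have "deriv F (of_real s) / F (of_real s) - of_nat m / (of_real s - of_real z) =
        deriv F (of_real s) / of_real (g s) - of_real (m / (s - z))"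
      by (simp add: real)
    moreover have "\<bar>deriv g s / g s - m / (s - z)\<bar> =
        \<bar>Re (deriv F (of_real s) / of_real (g s) - of_real (m / (s - z)))\<bar>"
      by (simp add: deriv_real_restriction[OF holo real] Re_divide_of_real)
    ultimately show "\<bar>deriv g s / g s - m / (s - z)\<bar> \<le> B"
      using abs_Re_le_cmod \<open>norm (deriv F (of_real s) / F (of_real s) - _) \<le> B\<close>
      by (metis order_trans)
  qed
  then show ?thesis using \<open>0 < r\<close> by blast
qed

theorem mainTheorem8:
  fixes k :: nat and a \<alpha> :: "nat \<Rightarrow> real"
  assumes "k \<ge> 1"
    and "\<forall>i\<in>{1..k}. a i \<noteq> 0"
    and "strict_mono_on {1..k} \<alpha>"
  shows "amenable {0<..} (\<lambda>x. \<Sum>i=1..k. a i * x powr \<alpha> i)"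
proof -
  let ?g = "exp_sum {1..k} a \<alpha>"
  have f_eq: "(\<Sum>i=1..k. a i * x powr \<alpha> i) = ?g (ln x)" if "0 < x" for x
    using that by (simp add: exp_sum_def powr_def mult.commute)
  have differentiable: "?g field_differentiable at t" for t
    using has_real_derivative_exp_sum field_differentiable_def by blast
  obtain M where infinity: "eventually (\<lambda>s. ?g s \<noteq> 0 \<and> \<bar>deriv ?g s / ?g s\<bar> \<le> M) at_infinity"
    using exp_sum_log_deriv_bounded_at_infinity[of "{1..k}" \<alpha> a] assms strict_mono_on_imp_inj_on
    by auto
  then obtain s0 where "?g s0 \<noteq> 0"
    unfolding eventually_at_infinity by (metis real_norm_def abs_ge_self)
  obtain F where "F holomorphic_on UNIV" "\<And>s. F (of_real s) = of_real (?g s)"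
    using exp_sum_entire_extension by blast
  then have "\<exists>\<delta>>0. \<exists>m B. log_deriv_expansion ?g z m \<delta> B" for z
    using \<open>?g s0 \<noteq> 0\<close> by (intro log_deriv_expansion_of_real_entire[where u = "of_real s0"]) auto
  then obtain C where "0 < C" "\<And>t. log_amenable_at C ?g t"
    using log_amenable_uniform[OF _ infinity] by blast
  then show ?thesis using f_eq differentiable by (intro amenable_if_log_amenable) auto
qed

end
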